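(* Let $a>0$, $b>0$, and let $\bar{\mathcal W}^{a,b}(t)=(M_1(G_{a,b}(t)),\dots,M_q(G_{a,b}(t)))$. Its Lévy measure $\Pi^{\bar{\mathcal W}}$ is given, for $A_1,\dots,A_q\subseteq\mathbb{N}_0$, by $$\Pi^{\bar{\mathcal W}}(A_1\times\cdots\times A_q)=b\sum_{\bar n\succ\bar0}\ \sum_{\substack{\Omega(k_i,n_i)\\ i=1,\dots,q}}\Gamma\Big(\sum_{i=1}^q\sum_{j=1}^{k_i}n_{ij}\Big)\prod_{i=1}^q\prod_{j=1}^{k_i}\frac{(\lambda_{ij}/(\lambda+a))^{n_{ij}}}{n_{ij}!}\,\mathbb{I}_{\{n_i\in A_i\}}.$$
   Context: Fix $q\ge1$, integers $k_1,\dots,k_q\ge1$, $\lambda_{ij}>0$ ($1\le i\le q$, $1\le j\le k_i$), $\lambda=\sum_{i,j}\lambda_{ij}$. The MGCP $\bar M(t)=(M_1(t),\dots,M_q(t))$ is the $\mathbb{N}_0^q$-valued Lévy process with $\bar M(0)=\bar0$, independent components and $\Pr\{\bar M(t)=\bar n\}=\prod_{i=1}^q\sum_{\Omega(k_i,n_i)}\prod_{j=1}^{k_i}\frac{(\lambda_{ij}t)^{n_{ij}}}{n_{ij}!}e^{-\lambda_{ij}t}$. $\{G_{a,b}(t)\}$ is a gamma subordinator independent of $\bar M$, with $\mathbb{E}e^{-sG_{a,b}(t)}=(1+s/a)^{-bt}$ and Lévy measure $bs^{-1}e^{-as}\,\mathrm{d}s$. $\Omega(k_i,n_i)=\{(n_{i1},\dots,n_{ik_i})\in\mathbb{N}_0^{k_i}:\sum_jjn_{ij}=n_i\}$;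 the inner sum runs over families $(n_{ij})$ with $(n_{i1},\dots,n_{ik_i})\in\Omega(k_i,n_i)$ for each $i$. $\bar n\succ\bar0$ means $\bar n\in\mathbb{N}_0^q\setminus\{\bar0\}$. *)

theory Defs
  imports "HOL-Analysis.Analysis"
begin

text \<open>Points of N_0^q: functions nat => nat supported on {1..q}.\<close>
definition NQ :: "nat \<Rightarrow> (nat \<Rightarrow> nat) set" where
  "NQ q = {n. \<forall>i. i \<notin> {1..q} \<longrightarrow> n i = 0}"

definition Omega :: "nat \<Rightarrow> nat \<Rightarrow> (nat \<Rightarrow> nat) set" where
  "Omega k n = {v. (\<forall>j. j \<notin> {1..k} \<longrightarrow> v j = 0) \<and> (\<Sum>j\<in>{1..k}. j * v j) = n}"

definition Fam :: "nat \<Rightarrow> (nat \<Rightarrow> nat) \<Rightarrow> (nat \<Rightarrow> nat) \<Rightarrow> (nat \<Rightarrow> nat \<Rightarrow> nat) set" where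
  "Fam q k nn = {m. (\<forall>i\<in>{1..q}. m i \<in> Omega (k i) (nn i)) \<and> (\<forall>i. i \<notin> {1..q} \<longrightarrow> m i = (\<lambda>_. 0))}"

definition mgcp_pmf :: "nat \<Rightarrow> (nat \<Rightarrow> nat) \<Rightarrow> (nat \<Rightarrow> nat \<Rightarrow> real) \<Rightarrow> real \<Rightarrow> (nat \<Rightarrow> nat) \<Rightarrow> real" where
  "mgcp_pmf q k lam s nn =
     (\<Prod>i\<in>{1..q}. \<Sum>v\<in>Omega (k i) (nn i).
        \<Prod>j\<in>{1..k i}. (lam i j * s) ^ (v j) / fact (v j) * exp (- lam i j * s))"

text \<open>Density of G_{a,b}(t) (Gamma law with shape b t and rate a, t > 0),
  determined by E exp(-s G(t)) = (1 + s/a)^(-b t).\<close>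
definition gamma_sub_density :: "real \<Rightarrow> real \<Rightarrow> real \<Rightarrow> real \<Rightarrow> real" where
  "gamma_sub_density a b t s =
     a powr (b * t) * s powr (b * t - 1) * exp (- a * s) / Gamma (b * t)"

text \<open>Pr{W(t) = n} = Pr{M(G(t)) = n}, for t > 0 (M and G independent).\<close>
definition W_pmf :: "nat \<Rightarrow> (nat \<Rightarrow> nat) \<Rightarrow> (nat \<Rightarrow> nat \<Rightarrow> real) \<Rightarrow> real \<Rightarrow> real \<Rightarrow> real
    \<Rightarrow> (nat \<Rightarrow> nat) \<Rightarrow> real" where
  "W_pmf q k lam a b t nn =
     (LINT s:{0<..}|lborel. mgcp_pmf q k lam s nn * gamma_sub_density a b t s)"

definition W_charfun :: "nat \<Rightarrow> (nat \<Rightarrow> nat) \<Rightarrow> (nat \<Rightarrow> nat \<Rightarrow> real) \<Rightarrow> real \<Rightarrow> real \<Rightarrow> real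
    \<Rightarrow> (nat \<Rightarrow> real) \<Rightarrow> complex" where
  "W_charfun q k lam a b t \<theta> =
     infsum (\<lambda>nn. complex_of_real (W_pmf q k lam a b t nn) * cis (\<Sum>i\<in>{1..q}. \<theta> i * real (nn i))) (NQ q)"

definition lam_total :: "nat \<Rightarrow> (nat \<Rightarrow> nat) \<Rightarrow> (nat \<Rightarrow> nat \<Rightarrow> real) \<Rightarrow> real" where
  "lam_total q k lam = (\<Sum>i\<in>{1..q}. \<Sum>j\<in>{1..k i}. lam i j)"

definition zeroQ :: "nat \<Rightarrow> nat" where "zeroQ = (\<lambda>_. 0)"

definition levy_formula :: "nat \<Rightarrow> (nat \<Rightarrow> nat) \<Rightarrow> (nat \<Rightarrow> nat \<Rightarrow> real) \<Rightarrow> real \<Rightarrow> real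
    \<Rightarrow> (nat \<Rightarrow> nat set) \<Rightarrow> real" where
  "levy_formula q k lam a b A =
     b * infsum (\<lambda>nn. \<Sum>m\<in>Fam q k nn.
            Gamma (real (\<Sum>i\<in>{1..q}. \<Sum>j\<in>{1..k i}. m i j)) *
            (\<Prod>i\<in>{1..q}. \<Prod>j\<in>{1..k i}.
                (lam i j / (lam_total q k lam + a)) ^ (m i j) / fact (m i j)) *
            (if \<forall>i\<in>{1..q}. nn i \<in> A i then 1 else 0))
       (NQ q - {zeroQ})"

end

(* Conditionally on G(t) = s, the MGCP probability of n is a finite sum, over the families (n_ij),
   of products of Poisson weights; integrating s^r exp(-lambda s) against the gamma density turns
   it into Gamma(bt + r). Hence, with p_ij = lambda_ij / (lambda + a), rho = sum p_ij < 1 and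
   X(theta) = sum p_ij exp(i j theta_i), the law of W(t) is negative multinomial: Pr{W(t) = n} is the
   coefficient of z^n in (1 - rho)^(bt) (1 - sum p_ij z_i^j)^(-bt). So the characteristic function
   of W(t) is exp(t b (log(1 - rho) - log(1 - X(theta)))), and expanding
   -b log(1 - X) = sum_r b Gamma(r) X^r / r! with the multinomial theorem exhibits the Levy weights
   of the formula. Every rearrangement is justified by absolute convergence, as |X(theta)| <= rho. *)

theory Submission
  imports Defs
begin

section \<open>Multinomial series\<close>

definition weak_compositions :: "'a set \<Rightarrow> nat \<Rightarrow> ('a \<Rightarrow> nat) set" where
  "weak_compositions P r = {f. (\<forall>p. p \<notin> P \<longrightarrow> f p = 0) \<and> sum f P = r}"

lemma finite_weak_compositions:
  assumes "finite P"
  shows "finite (weak_compositions P r)"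
proof (rule finite_subset)
  show "weak_compositions P r \<subseteq> {f. \<forall>p. (p \<in> P \<longrightarrow> f p \<in> {0..r}) \<and> (p \<notin> P \<longrightarrow> f p = 0)}"
    using assms by (auto simp: weak_compositions_def intro: member_le_sum)
  show "finite {f. \<forall>p. (p \<in> P \<longrightarrow> f p \<in> {0..r}) \<and> (p \<notin> P \<longrightarrow> f p = (0::nat))}"
    using assms by (intro finite_set_of_finite_funs) auto
qed

lemma sum_weak_compositions_insert:
  assumes "finite P" and "i \<notin> P"
  shows "(\<Sum>f\<in>weak_compositions (insert i P) r. g f) =
         (\<Sum>a\<le>r. \<Sum>h\<in>weak_compositions P (r - a). g (h(i := a)))"
proof -
  have upd: "(\<Sum>p\<in>P. if p = i then a else f p) = sum f P" for f :: "'a \<Rightarrow> nat" and a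
    using assms(2) by (intro sum.cong) auto
  have "(\<Sum>f\<in>weak_compositions (insert i P) r. g f) =
        (\<Sum>(a, h)\<in>Sigma {..r} (\<lambda>a. weak_compositions P (r - a)). g (h(i := a)))"
    by (rule sum.reindex_bij_witness[where i="\<lambda>(a, h). h(i := a)" and j="\<lambda>f. (f i, f(i := 0))"])
       (use assms in \<open>auto simp: weak_compositions_def upd\<close>)
  also have "\<dots> = (\<Sum>a\<le>r. \<Sum>h\<in>weak_compositions P (r - a). g (h(i := a)))"
    using assms(1) by (intro sum.Sigma[symmetric]) (auto intro: finite_weak_compositions)
  finally show ?thesis .
qed

lemma multinomial_theorem:
  fixes x :: "'a \<Rightarrow> 'c::field_char_0"
  assumes "finite P"
  shows "(\<Sum>f\<in>weak_compositions P r. \<Prod>p\<in>P. x p ^ f p / fact (f p)) = sum x P ^ r / fact r"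
  using assms
proof (induction P arbitrary: r rule: finite_induct)
  case empty
  have "weak_compositions ({} :: 'a set) r = (if r = 0 then {\<lambda>_. 0} else {})"
    by (auto simp: weak_compositions_def)
  then show ?case by (cases r) auto
next
  case (insert i P)
  have upd: "(\<Prod>p\<in>P. x p ^ (if p = i then a else h p) / fact (if p = i then a else h p)) =
             (\<Prod>p\<in>P. x p ^ h p / fact (h p))" for a h
    using insert(2) by (intro prod.cong) auto
  have "(\<Sum>f\<in>weak_compositions (insert i P) r. \<Prod>p\<in>insert i P. x p ^ f p / fact (f p)) =
        (\<Sum>a\<le>r. \<Sum>h\<in>weak_compositions P (r - a). x i ^ a / fact a * (\<Prod>p\<in>P. x p ^ h p / fact (h p)))"
    using insert(1,2) by (simp add: sum_weak_compositions_insert upd)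
  also have "\<dots> = (\<Sum>a\<le>r. x i ^ a / fact a * (sum x P ^ (r - a) / fact (r - a)))"
    by (simp only: sum_distrib_left[symmetric] insert.IH)
  also have "\<dots> = (\<Sum>a\<le>r. of_nat (r choose a) * x i ^ a * sum x P ^ (r - a)) / fact r"
    by (simp add: sum_divide_distrib binomial_fact field_simps)
  also have "\<dots> = sum x (insert i P) ^ r / fact r"
    using insert(1,2) by (simp add: binomial_ring)
  finally show ?case .
qed

lemma has_sum_weak_compositions:
  fixes x :: "'a \<Rightarrow> 'c::real_normed_field" and c :: "nat \<Rightarrow> 'c"
  assumes "finite P"
  shows "((\<lambda>f. c (sum f P) * (\<Prod>p\<in>P. x p ^ f p / fact (f p))) has_sum c r * sum x P ^ r / fact r)
           (weak_compositions P r)"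
proof -
  have "(\<Sum>f\<in>weak_compositions P r. c (sum f P) * (\<Prod>p\<in>P. x p ^ f p / fact (f p))) =
        c r * (\<Sum>f\<in>weak_compositions P r. \<Prod>p\<in>P. x p ^ f p / fact (f p))"
    by (auto simp: weak_compositions_def sum_distrib_left intro: sum.cong)
  then show ?thesis
    using assms by (intro has_sum_finiteI) (simp_all add: multinomial_theorem finite_weak_compositions)
qed

lemma has_sum_multinomial_series:
  fixes x :: "'a \<Rightarrow> 'c::{real_normed_field,banach}" and c :: "nat \<Rightarrow> 'c"
  assumes P: "finite P"
    and abs_conv: "summable (\<lambda>r. norm (c r) * (\<Sum>p\<in>P. norm (x p)) ^ r / fact r)"
    and series: "(\<lambda>r. c r * sum x P ^ r / fact r) sums S"
  shows "((\<lambda>f. c (sum f P) * (\<Prod>p\<in>P. x p ^ f p / fact (f p))) has_sum S)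
           {f. \<forall>p. p \<notin> P \<longrightarrow> f p = 0}"
proof -
  define h where "h f = c (sum f P) * (\<Prod>p\<in>P. x p ^ f p / fact (f p))" for f
  define \<rho> where "\<rho> = (\<Sum>p\<in>P. norm (x p))"
  have supp_eq: "{f. \<forall>p. p \<notin> P \<longrightarrow> f p = 0} = (\<Union>r. weak_compositions P r)"
    by (auto simp: weak_compositions_def)
  have norm_h: "norm (h f) = norm (c (sum f P)) * (\<Prod>p\<in>P. norm (x p) ^ f p / fact (f p))" for f
    by (simp add: h_def norm_mult prod_norm[symmetric] norm_divide norm_power)
  have "(\<lambda>r. norm (c r) * \<rho> ^ r / fact r) summable_on UNIV"
    using abs_conv by (subst summable_on_UNIV_nonneg_real_iff) (auto simp: \<rho>_def sum_nonneg)
  then have "(\<lambda>f. norm (h f)) summable_on (\<Union>r. weak_compositions P r)"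
    unfolding norm_h \<rho>_def
    by (rule summable_on_UnionI[OF has_sum_weak_compositions[OF P]])
       (auto simp: disjoint_family_on_def weak_compositions_def intro!: mult_nonneg_nonneg prod_nonneg)
  then have "h summable_on {f. \<forall>p. p \<notin> P \<longrightarrow> f p = 0}"
    unfolding supp_eq by (rule abs_summable_summable)
  moreover have bij: "bij_betw (\<lambda>f. (sum f P, f)) {f. \<forall>p. p \<notin> P \<longrightarrow> f p = 0}
                                                 (Sigma UNIV (weak_compositions P))"
    by (rule bij_betwI[where g=snd]) (auto simp: weak_compositions_def)
  ultimately have "(h \<circ> snd) summable_on Sigma UNIV (weak_compositions P)"
    using summable_on_reindex_bij_betw[OF bij, of "h \<circ> snd"] by simp
  moreover have "((\<lambda>r. c r * sum x P ^ r / fact r) has_sum S) UNIV"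
  proof (rule norm_summable_imp_has_sum[OF _ series])
    have "norm (sum x P) \<le> \<rho>"
      unfolding \<rho>_def by (rule norm_sum)
    then show "summable (\<lambda>r. norm (c r * sum x P ^ r / fact r))"
      by (intro summable_comparison_test[OF _ abs_conv] exI[of _ 0])
         (auto simp: \<rho>_def norm_mult norm_divide norm_power
               intro!: divide_right_mono mult_left_mono power_mono)
  qed
  ultimately have "((h \<circ> snd) has_sum S) (Sigma UNIV (weak_compositions P))"
    by (intro has_sum_SigmaI) (simp_all add: h_def has_sum_weak_compositions[OF P])
  then show ?thesis
    unfolding has_sum_reindex_bij_betw[OF bij, symmetric] by (simp add: h_def)
qed

section \<open>Families and composite coefficients\<close>

lemma finite_Omega: "finite (Omega k n)"
proof (rule finite_subset)
  show "Omega k n \<subseteq> {v. \<forall>j. (j \<in> {1..k} \<longrightarrow> v j \<in> {0..n}) \<and> (j \<notin> {1..k} \<longrightarrow> v j = 0)}"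
  proof safe
    fix v j assume v: "v \<in> Omega k n" and j: "j \<in> {1..k}"
    have "v j \<le> j * v j" using j by simp
    also have "\<dots> \<le> (\<Sum>j\<in>{1..k}. j * v j)" by (rule member_le_sum) (use j in auto)
    finally show "v j \<in> {0..n}" using v by (auto simp: Omega_def)
  qed (auto simp: Omega_def)
  show "finite {v. \<forall>j. (j \<in> {1..k} \<longrightarrow> v j \<in> {0..n}) \<and> (j \<notin> {1..k} \<longrightarrow> v j = (0::nat))}"
    by (rule finite_set_of_finite_funs) auto
qed

lemma finite_Fam: "finite (Fam q k n)"
proof (rule finite_subset)
  show "Fam q k n \<subseteq> {m. \<forall>i. (i \<in> {1..q} \<longrightarrow> m i \<in> (\<Union>i\<in>{1..q}. Omega (k i) (n i))) \<and>
                                 (i \<notin> {1..q} \<longrightarrow> m i = (\<lambda>_. 0))}"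
    unfolding Fam_def by blast
  show "finite \<dots>"
    by (intro finite_set_of_finite_funs) (auto intro: finite_Omega)
qed

lemma prod_sum_Omega_eq_sum_Fam:
  fixes g :: "nat \<Rightarrow> (nat \<Rightarrow> nat) \<Rightarrow> 'c::comm_semiring_1"
  shows "(\<Prod>i\<in>{1..q}. \<Sum>v\<in>Omega (k i) (n i). g i v) = (\<Sum>m\<in>Fam q k n. \<Prod>i\<in>{1..q}. g i (m i))"
proof -
  have "(\<Prod>i\<in>{1..q}. \<Sum>v\<in>Omega (k i) (n i). g i v) =
        (\<Sum>m\<in>PiE {1..q} (\<lambda>i. Omega (k i) (n i)). \<Prod>i\<in>{1..q}. g i (m i))"
    by (rule prod_sum_PiE) (auto intro: finite_Omega)
  also have "\<dots> = (\<Sum>m\<in>Fam q k n. \<Prod>i\<in>{1..q}. g i (m i))"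
    by (rule sum.reindex_bij_witness[where i="\<lambda>m. restrict m {1..q}"
                                      and j="\<lambda>m i. if i \<in> {1..q} then m i else (\<lambda>_. 0)"])
       (auto simp: Fam_def PiE_def extensional_def fun_eq_iff)
  finally show ?thesis .
qed

lemma Fam_zeroQ: "Fam q k zeroQ = {\<lambda>_ _. 0}"
proof -
  have "m i j = 0" if "m \<in> Fam q k zeroQ" for m i j
  proof (cases "i \<in> {1..q} \<and> j \<in> {1..k i}")
    case True
    then have "(\<Sum>j\<in>{1..k i}. j * m i j) = 0"
      using that by (auto simp: Fam_def Omega_def zeroQ_def)
    then show ?thesis
      using True by simp
  qed (use that in \<open>auto simp: Fam_def Omega_def\<close>)
  then have "Fam q k zeroQ \<subseteq> {\<lambda>_ _. 0}"
    by (intro subsetI) (simp add: fun_eq_iff)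
  moreover have "(\<lambda>_ _. 0) \<in> Fam q k zeroQ"
    by (simp add: Fam_def Omega_def zeroQ_def)
  ultimately show ?thesis
    by blast
qed

lemma bij_betw_Fam:
  "bij_betw (\<lambda>f. (\<lambda>i. \<Sum>j\<in>{1..k i}. j * f (i, j), curry f))
     {f. \<forall>p. p \<notin> Sigma {1..q} (\<lambda>i. {1..k i}) \<longrightarrow> f p = 0} (Sigma (NQ q) (Fam q k))"
proof (rule bij_betwI[where g="\<lambda>(n, m). case_prod m"])
  show "(\<lambda>f. (\<lambda>i. \<Sum>j\<in>{1..k i}. j * f (i, j), curry f))
          \<in> {f. \<forall>p. p \<notin> Sigma {1..q} (\<lambda>i. {1..k i}) \<longrightarrow> f p = 0} \<rightarrow> Sigma (NQ q) (Fam q k)"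
    by (auto simp: NQ_def Fam_def Omega_def fun_eq_iff)
next
  show "(\<lambda>(n, m). case_prod m) \<in> Sigma (NQ q) (Fam q k)
          \<rightarrow> {f. \<forall>p. p \<notin> Sigma {1..q} (\<lambda>i. {1..k i}) \<longrightarrow> f p = 0}"
  proof (intro Pi_I CollectI allI impI)
    fix nm p assume nm: "nm \<in> Sigma (NQ q) (Fam q k)" and p: "p \<notin> Sigma {1..q} (\<lambda>i. {1..k i})"
    obtain n m where "nm = (n, m)" "m \<in> Fam q k n" using nm by blast
    moreover obtain i j where "p = (i, j)" by fastforce
    ultimately show "(case nm of (n, m) \<Rightarrow> case_prod m) p = 0"
      using p by (cases "i \<in> {1..q}") (auto simp: Fam_def Omega_def)
  qed
next
  fix nm assume "nm \<in> Sigma (NQ q) (Fam q k)"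
  then obtain n m where nm: "nm = (n, m)" "n \<in> NQ q" "m \<in> Fam q k n" by blast
  have "n i = (\<Sum>j\<in>{1..k i}. j * m i j)" for i
    using nm by (cases "i \<in> {1..q}") (auto simp: NQ_def Fam_def Omega_def)
  then show "(\<lambda>f. (\<lambda>i. \<Sum>j\<in>{1..k i}. j * f (i, j), curry f)) ((\<lambda>(n, m). case_prod m) nm) = nm"
    using nm by auto
qed auto

(* The coefficient of z^n in the composite power series sum_r c_r (sum_(i,j) x_ij z_i^j)^r / r!. *)
definition composite_coeff ::
    "(nat \<Rightarrow> 'c::field_char_0) \<Rightarrow> nat \<Rightarrow> (nat \<Rightarrow> nat) \<Rightarrow> (nat \<Rightarrow> nat \<Rightarrow> 'c) \<Rightarrow> (nat \<Rightarrow> nat) \<Rightarrow> 'c" where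
  "composite_coeff c q k x n =
     (\<Sum>m\<in>Fam q k n. c (\<Sum>i\<in>{1..q}. \<Sum>j\<in>{1..k i}. m i j) *
        (\<Prod>i\<in>{1..q}. \<Prod>j\<in>{1..k i}. x i j ^ m i j / fact (m i j)))"

lemma has_sum_composite_coeff:
  fixes x :: "nat \<Rightarrow> nat \<Rightarrow> 'c::{real_normed_field,banach}"
  assumes abs_conv: "summable (\<lambda>r. norm (c r) * (\<Sum>i\<in>{1..q}. \<Sum>j\<in>{1..k i}. norm (x i j)) ^ r / fact r)"
    and series: "(\<lambda>r. c r * (\<Sum>i\<in>{1..q}. \<Sum>j\<in>{1..k i}. x i j) ^ r / fact r) sums S"
  shows "(composite_coeff c q k x has_sum S) (NQ q)"
proof -
  define I where "I = Sigma {1..q} (\<lambda>i. {1..k i})"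
  have sum_I: "(\<Sum>i\<in>{1..q}. \<Sum>j\<in>{1..k i}. g i j) = (\<Sum>(i, j)\<in>I. g i j)"
    for g :: "nat \<Rightarrow> nat \<Rightarrow> 'd::comm_monoid_add"
    unfolding I_def by (rule sum.Sigma) auto
  have prod_I: "(\<Prod>i\<in>{1..q}. \<Prod>j\<in>{1..k i}. g i j) = (\<Prod>(i, j)\<in>I. g i j)"
    for g :: "nat \<Rightarrow> nat \<Rightarrow> 'd::comm_monoid_mult"
    unfolding I_def by (rule prod.Sigma) auto
  define F where "F = (\<lambda>(n::nat \<Rightarrow> nat, m). c (\<Sum>i\<in>{1..q}. \<Sum>j\<in>{1..k i}. m i j) *
                        (\<Prod>i\<in>{1..q}. \<Prod>j\<in>{1..k i}. x i j ^ m i j / fact (m i j)))"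
  have "(\<Sum>i\<in>{1..q}. \<Sum>j\<in>{1..k i}. norm (x i j)) = (\<Sum>p\<in>I. norm (case_prod x p))"
    and "(\<Sum>i\<in>{1..q}. \<Sum>j\<in>{1..k i}. x i j) = sum (case_prod x) I"
    using sum_I[of "\<lambda>i j. norm (x i j)"] sum_I[of x] by (simp_all add: split_def)
  with abs_conv series
  have "((\<lambda>f. c (sum f I) * (\<Prod>p\<in>I. case_prod x p ^ f p / fact (f p))) has_sum S)
          {f. \<forall>p. p \<notin> I \<longrightarrow> f p = 0}"
    by (intro has_sum_multinomial_series) (simp_all add: I_def)
  moreover have "F (n, curry f) = c (sum f I) * (\<Prod>p\<in>I. case_prod x p ^ f p / fact (f p))" for n f
    using sum_I[of "curry f"] prod_I[of "\<lambda>i j. x i j ^ f (i, j) / fact (f (i, j))"]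
    by (simp add: F_def split_def)
  ultimately have "(F has_sum S) (Sigma (NQ q) (Fam q k))"
    unfolding has_sum_reindex_bij_betw[OF bij_betw_Fam, symmetric] I_def by simp
  then show ?thesis
    unfolding composite_coeff_def
    by (rule has_sum_SigmaD) (simp add: F_def finite_Fam)
qed

lemma composite_coeff_mult_left:
  "y * composite_coeff c q k x n = composite_coeff (\<lambda>r. y * c r) q k x n"
  unfolding composite_coeff_def sum_distrib_left by (simp add: mult.assoc)

lemma composite_coeff_mult_right:
  "composite_coeff c q k x n * y = composite_coeff (\<lambda>r. c r * y) q k x n"
  unfolding composite_coeff_def sum_distrib_right by (simp add: mult_ac)

lemma composite_coeff_scale:
  "composite_coeff (\<lambda>r. c r / d ^ r) q k x n = composite_coeff c q k (\<lambda>i j. x i j / d) n"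
proof -
  have "(\<Prod>i\<in>{1..q}. \<Prod>j\<in>{1..k i}. (x i j / d) ^ m i j / fact (m i j)) =
        (\<Prod>i\<in>{1..q}. \<Prod>j\<in>{1..k i}. x i j ^ m i j / fact (m i j)) / d ^ (\<Sum>i\<in>{1..q}. \<Sum>j\<in>{1..k i}. m i j)"
    for m :: "nat \<Rightarrow> nat \<Rightarrow> nat"
  proof -
    have "(x i j / d) ^ m i j / fact (m i j) = x i j ^ m i j / fact (m i j) / d ^ m i j" for i j
      by (simp add: power_divide)
    then show ?thesis
      by (simp only: prod_dividef power_sum)
  qed
  then show ?thesis
    unfolding composite_coeff_def by (simp add: field_simps)
qed

lemma composite_coeff_nonneg:
  fixes c :: "nat \<Rightarrow> real"
  assumes "\<And>r. c r \<ge> 0" and "\<forall>i\<in>{1..q}. \<forall>j\<in>{1..k i}. x i j \<ge> 0"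
  shows "composite_coeff c q k x n \<ge> 0"
  unfolding composite_coeff_def using assms
  by (intro sum_nonneg mult_nonneg_nonneg prod_nonneg) auto

lemma composite_coeff_zeroQ: "composite_coeff c q k x zeroQ = c 0"
  by (simp add: composite_coeff_def Fam_zeroQ)

section \<open>Characteristic sums\<close>

lemma cis_sum: "finite A \<Longrightarrow> cis (\<Sum>x\<in>A. f x) = (\<Prod>x\<in>A. cis (f x))"
  by (induction A rule: finite_induct) (simp_all add: cis_mult[symmetric])

lemma cis_Fam:
  assumes "m \<in> Fam q k n"
  shows "cis (\<Sum>i\<in>{1..q}. \<theta> i * real (n i)) = (\<Prod>i\<in>{1..q}. \<Prod>j\<in>{1..k i}. cis (\<theta> i * real j) ^ m i j)"
proof -
  have "n i = (\<Sum>j\<in>{1..k i}. j * m i j)" if "i \<in> {1..q}" for i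
    using assms that by (auto simp: Fam_def Omega_def)
  then have "\<theta> i * real (n i) = (\<Sum>j\<in>{1..k i}. real (m i j) * (\<theta> i * real j))" if "i \<in> {1..q}" for i
    using that by (simp add: sum_distrib_left mult_ac)
  then show ?thesis
    by (simp add: cis_sum Complex.DeMoivre del: of_nat_sum)
qed

definition jump_char :: "nat \<Rightarrow> (nat \<Rightarrow> nat) \<Rightarrow> (nat \<Rightarrow> nat \<Rightarrow> real) \<Rightarrow> (nat \<Rightarrow> real) \<Rightarrow> complex" where
  "jump_char q k p \<theta> = (\<Sum>i\<in>{1..q}. \<Sum>j\<in>{1..k i}. complex_of_real (p i j) * cis (\<theta> i * real j))"

lemma of_real_composite_coeff_mult_cis:
  "complex_of_real (composite_coeff c q k p n) * cis (\<Sum>i\<in>{1..q}. \<theta> i * real (n i)) =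
   composite_coeff (\<lambda>r. complex_of_real (c r)) q k (\<lambda>i j. complex_of_real (p i j) * cis (\<theta> i * real j)) n"
  unfolding composite_coeff_def of_real_sum sum_distrib_right
proof (rule sum.cong[OF refl])
  fix m assume m: "m \<in> Fam q k n"
  have "(\<Prod>i\<in>{1..q}. \<Prod>j\<in>{1..k i}. (complex_of_real (p i j) * cis (\<theta> i * real j)) ^ m i j / fact (m i j)) =
        complex_of_real (\<Prod>i\<in>{1..q}. \<Prod>j\<in>{1..k i}. p i j ^ m i j / fact (m i j)) *
        (\<Prod>i\<in>{1..q}. \<Prod>j\<in>{1..k i}. cis (\<theta> i * real j) ^ m i j)"
    by (simp add: power_mult_distrib prod.distrib[symmetric] mult_ac)
  then show "complex_of_real (c (\<Sum>i\<in>{1..q}. \<Sum>j\<in>{1..k i}. m i j) *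
          (\<Prod>i\<in>{1..q}. \<Prod>j\<in>{1..k i}. p i j ^ m i j / fact (m i j))) * cis (\<Sum>i\<in>{1..q}. \<theta> i * real (n i)) =
        complex_of_real (c (\<Sum>i\<in>{1..q}. \<Sum>j\<in>{1..k i}. m i j)) *
          (\<Prod>i\<in>{1..q}. \<Prod>j\<in>{1..k i}. (complex_of_real (p i j) * cis (\<theta> i * real j)) ^ m i j / fact (m i j))"
    unfolding cis_Fam[OF m] by (simp add: mult_ac)
qed

lemma norm_jump_char_le:
  assumes "\<forall>i\<in>{1..q}. \<forall>j\<in>{1..k i}. p i j \<ge> 0"
  shows "norm (jump_char q k p \<theta>) \<le> (\<Sum>i\<in>{1..q}. \<Sum>j\<in>{1..k i}. p i j)"
proof -
  have "norm (jump_char q k p \<theta>) \<le>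
        (\<Sum>i\<in>{1..q}. \<Sum>j\<in>{1..k i}. norm (complex_of_real (p i j) * cis (\<theta> i * real j)))"
    unfolding jump_char_def by (intro order.trans[OF norm_sum] sum_mono norm_sum)
  also have "\<dots> = (\<Sum>i\<in>{1..q}. \<Sum>j\<in>{1..k i}. p i j)"
    using assms by (intro sum.cong refl) (simp add: norm_mult)
  finally show ?thesis .
qed

lemma jump_char_zero:
  "jump_char q k p (\<lambda>_. 0) = complex_of_real (\<Sum>i\<in>{1..q}. \<Sum>j\<in>{1..k i}. p i j)"
  by (simp add: jump_char_def)

lemma has_sum_composite_coeff_cis:
  fixes c :: "nat \<Rightarrow> real" and p :: "nat \<Rightarrow> nat \<Rightarrow> real"
  assumes p_nonneg: "\<forall>i\<in>{1..q}. \<forall>j\<in>{1..k i}. p i j \<ge> 0"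
    and c_nonneg: "\<And>r. c r \<ge> 0"
    and total: "(\<Sum>i\<in>{1..q}. \<Sum>j\<in>{1..k i}. p i j) < 1"
    and series: "\<And>z. norm z < 1 \<Longrightarrow> (\<lambda>r. complex_of_real (c r) * z ^ r / fact r) sums F z"
  shows "((\<lambda>n. complex_of_real (composite_coeff c q k p n) * cis (\<Sum>i\<in>{1..q}. \<theta> i * real (n i)))
           has_sum F (jump_char q k p \<theta>)) (NQ q)"
proof -
  define \<rho> where "\<rho> = (\<Sum>i\<in>{1..q}. \<Sum>j\<in>{1..k i}. p i j)"
  define x where "x = (\<lambda>i j. complex_of_real (p i j) * cis (\<theta> i * real j))"
  have norm_x: "(\<Sum>i\<in>{1..q}. \<Sum>j\<in>{1..k i}. norm (x i j)) = \<rho>"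
    using p_nonneg by (auto simp: x_def \<rho>_def norm_mult intro!: sum.cong)
  \<comment> \<open>As c and p are nonnegative, absolute convergence is convergence of the series at \<open>z = \<rho>\<close>.\<close>
  have "0 \<le> \<rho>"
    using p_nonneg by (auto simp: \<rho>_def intro!: sum_nonneg)
  then have "(\<lambda>r. complex_of_real (c r) * complex_of_real \<rho> ^ r / fact r) sums F \<rho>"
    using total[folded \<rho>_def] by (intro series) simp
  then have "summable (\<lambda>r. complex_of_real (c r * \<rho> ^ r / fact r))"
    by (simp add: sums_iff)
  then have "summable (\<lambda>r. c r * \<rho> ^ r / fact r)"
    unfolding summable_of_real_iff .
  then have "summable (\<lambda>r. norm (complex_of_real (c r)) * (\<Sum>i\<in>{1..q}. \<Sum>j\<in>{1..k i}. norm (x i j)) ^ r / fact r)"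
    using c_nonneg unfolding norm_x by simp
  moreover have "(\<lambda>r. complex_of_real (c r) * (\<Sum>i\<in>{1..q}. \<Sum>j\<in>{1..k i}. x i j) ^ r / fact r)
                   sums F (jump_char q k p \<theta>)"
  proof -
    have "(\<Sum>i\<in>{1..q}. \<Sum>j\<in>{1..k i}. x i j) = jump_char q k p \<theta>"
      by (simp add: jump_char_def x_def)
    moreover have "norm (jump_char q k p \<theta>) < 1"
      using norm_jump_char_le[OF p_nonneg, of \<theta>] total by linarith
    ultimately show ?thesis
      by (simp add: series)
  qed
  ultimately have "(composite_coeff (\<lambda>r. complex_of_real (c r)) q k x has_sum F (jump_char q k p \<theta>)) (NQ q)"
    by (rule has_sum_composite_coeff)
  then show ?thesis
    unfolding of_real_composite_coeff_mult_cis x_def .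
qed

(* At r = 0 both sides are 0: Gamma has a pole there and 1 / 0 = 0. *)
lemma Gamma_div_fact: "Gamma (real r) / fact r = 1 / real r"
proof (cases r)
  case (Suc r')
  have "Gamma (real r) = fact r'"
    using Gamma_fact[of r'] Suc by (simp add: add.commute)
  moreover have "fact r = real (Suc r') * fact r'"
    using Suc by simp
  ultimately show ?thesis
    using Suc by (simp del: of_nat_Suc)
qed simp

lemma Gamma_of_nat_nonneg: "Gamma (real r) \<ge> 0"
  by (cases "r = 0") (auto intro: less_imp_le Gamma_real_pos)

lemma Ln_series_Gamma:
  assumes "norm z < 1"
  shows "(\<lambda>r. complex_of_real (Gamma (real r)) * z ^ r / fact r) sums - Ln (1 - z)"
proof -
  have "(\<lambda>r. - ((- (- z)) ^ r) / of_nat r) sums Ln (1 + - z)"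
    by (rule Ln_series') (use assms in simp)
  moreover have "complex_of_real (Gamma (real r)) * z ^ r / fact r = z ^ r / of_nat r" for r
  proof -
    have "complex_of_real (Gamma (real r)) / fact r = 1 / of_nat r"
      using arg_cong[OF Gamma_div_fact[of r], of complex_of_real] by simp
    then show ?thesis
      by (metis times_divide_eq_left mult_1 mult.commute)
  qed
  ultimately show ?thesis
    using sums_minus by fastforce
qed

lemma binomial_series_pochhammer:
  assumes "norm z < 1"
  shows "(\<lambda>r. complex_of_real (pochhammer \<beta> r) * z ^ r / fact r) sums (1 - z) powr (- complex_of_real \<beta>)"
proof -
  have "(\<lambda>r. (- complex_of_real \<beta> gchoose r) * (- z) ^ r) sums (1 + - z) powr (- complex_of_real \<beta>)"
    by (rule gen_binomial_complex) (use assms in simp)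
  moreover have "(- complex_of_real \<beta> gchoose r) * (- z) ^ r = complex_of_real (pochhammer \<beta> r) * z ^ r / fact r" for r
  proof -
    have "(- complex_of_real \<beta> gchoose r) = (-1) ^ r * complex_of_real (pochhammer \<beta> r) / fact r"
      by (simp add: gbinomial_pochhammer pochhammer_of_real)
    then show ?thesis
      by (simp add: power_minus[of z])
  qed
  ultimately show ?thesis
    by simp
qed

section \<open>The gamma mixture\<close>

lemma mgcp_pmf_eq_composite_coeff:
  "mgcp_pmf q k lam s n = composite_coeff (\<lambda>r. s ^ r * exp (- lam_total q k lam * s)) q k lam n"
proof -
  have "(\<Prod>i\<in>{1..q}. \<Prod>j\<in>{1..k i}. (lam i j * s) ^ m i j / fact (m i j) * exp (- lam i j * s)) =
        s ^ (\<Sum>i\<in>{1..q}. \<Sum>j\<in>{1..k i}. m i j) * exp (- lam_total q k lam * s) *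
        (\<Prod>i\<in>{1..q}. \<Prod>j\<in>{1..k i}. lam i j ^ m i j / fact (m i j))" for m :: "nat \<Rightarrow> nat \<Rightarrow> nat"
  proof -
    have "(\<Prod>i\<in>{1..q}. \<Prod>j\<in>{1..k i}. (lam i j * s) ^ m i j / fact (m i j) * exp (- lam i j * s)) =
          (\<Prod>i\<in>{1..q}. \<Prod>j\<in>{1..k i}. s ^ m i j) * (\<Prod>i\<in>{1..q}. \<Prod>j\<in>{1..k i}. exp (- lam i j * s)) *
          (\<Prod>i\<in>{1..q}. \<Prod>j\<in>{1..k i}. lam i j ^ m i j / fact (m i j))"
      by (simp add: prod.distrib[symmetric] power_mult_distrib mult_ac)
    also have "(\<Prod>i\<in>{1..q}. \<Prod>j\<in>{1..k i}. s ^ m i j) = s ^ (\<Sum>i\<in>{1..q}. \<Sum>j\<in>{1..k i}. m i j)"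
      by (simp add: power_sum)
    also have "(\<Prod>i\<in>{1..q}. \<Prod>j\<in>{1..k i}. exp (- lam i j * s)) = exp (- lam_total q k lam * s)"
    proof -
      have "(\<Sum>i\<in>{1..q}. \<Sum>j\<in>{1..k i}. - lam i j * s) = - lam_total q k lam * s"
        by (simp add: lam_total_def sum_distrib_right sum_negf)
      then show ?thesis
        by (simp only: exp_sum finite_atLeastAtMost flip: exp_sum)
    qed
    finally show ?thesis .
  qed
  then show ?thesis
    unfolding mgcp_pmf_def prod_sum_Omega_eq_sum_Fam composite_coeff_def by simp
qed

lemma nn_integral_powr_exp:
  fixes x c :: real
  assumes x: "x > 0" and c: "c > 0"
  shows "(\<integral>\<^sup>+s. ennreal (indicator {0<..} s * (s powr (x - 1) * exp (- c * s))) \<partial>lborel) =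
         ennreal (Gamma x / c powr x)"
proof -
  define F where "F s = indicator {0<..} s * (s powr (x - 1) * exp (- c * s))" for s :: real
  define f where "f t = ennreal (indicator {0..} t * t powr (x - 1) / exp t)" for t :: real
  have F_meas: "F \<in> borel_measurable borel" and f_meas: "f \<in> borel_measurable borel"
    unfolding F_def f_def by measurable
  have f_scaled: "f (c * s) = ennreal (c powr (x - 1)) * ennreal (F s)" for s
  proof (cases "s > 0")
    case True
    then show ?thesis
      using c by (simp add: f_def F_def powr_mult exp_minus field_simps ennreal_mult[symmetric])
  next
    case False
    then have "c * s \<le> 0"
      using c by (simp add: mult_nonneg_nonpos)
    then show ?thesis
      using False by (cases "c * s = 0") (auto simp: f_def F_def)
  qed
  have "ennreal (Gamma x) = (\<integral>\<^sup>+t. f t \<partial>lborel)"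
    unfolding f_def by (rule Gamma_conv_nn_integral_real[OF x])
  also have "\<dots> = ennreal c * (\<integral>\<^sup>+s. f (0 + c * s) \<partial>lborel)"
    using c by (subst nn_integral_real_affine[OF f_meas, of c 0]) auto
  also have "\<dots> = ennreal (c powr x) * (\<integral>\<^sup>+s. ennreal (F s) \<partial>lborel)"
    using c F_meas
    by (simp add: f_scaled nn_integral_cmult mult.assoc[symmetric] powr_mult_base ennreal_mult[symmetric])
  finally have Gamma_eq: "ennreal (Gamma x) = ennreal (c powr x) * (\<integral>\<^sup>+s. ennreal (F s) \<partial>lborel)" .
  have "ennreal (Gamma x / c powr x) = ennreal (1 / c powr x) * ennreal (Gamma x)"
    using x by (simp add: ennreal_mult[symmetric])
  also have "\<dots> = (\<integral>\<^sup>+s. ennreal (F s) \<partial>lborel)"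
    unfolding Gamma_eq using c by (simp add: mult.assoc[symmetric] ennreal_mult[symmetric])
  finally show ?thesis
    unfolding F_def ..
qed

lemma has_bochner_integral_powr_exp:
  fixes x c :: real
  assumes x: "x > 0" and c: "c > 0"
  shows "has_bochner_integral lborel (\<lambda>s. indicator {0<..} s * (s powr (x - 1) * exp (- c * s)))
           (Gamma x / c powr x)"
  by (rule has_bochner_integral_nn_integral[OF _ _ _ nn_integral_powr_exp[OF x c]])
     (use x in \<open>auto simp: Gamma_real_pos less_imp_le\<close>)

lemma has_bochner_integral_gamma_moment:
  fixes L :: real
  assumes t: "t > 0" and a: "a > 0" and b: "b > 0" and La: "L + a > 0"
  shows "has_bochner_integral lborel
           (\<lambda>s. indicator {0<..} s * (s ^ r * exp (- L * s) * gamma_sub_density a b t s))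
           ((a / (L + a)) powr (b * t) * pochhammer (b * t) r / (L + a) ^ r)"
proof -
  define \<beta> where "\<beta> = b * t"
  have \<beta>: "\<beta> > 0"
    using b t by (simp add: \<beta>_def)
  have Gamma_\<beta>: "Gamma \<beta> \<noteq> 0"
    using Gamma_real_pos[OF \<beta>] by simp
  have Gamma_shift: "Gamma (\<beta> + r) = pochhammer \<beta> r * Gamma \<beta>"
    using \<beta> Gamma_\<beta> by (subst pochhammer_Gamma) auto
  have "has_bochner_integral lborel
          (\<lambda>s. a powr \<beta> / Gamma \<beta> * (indicator {0<..} s * (s powr (\<beta> + r - 1) * exp (- (L + a) * s))))
          (a powr \<beta> / Gamma \<beta> * (Gamma (\<beta> + r) / (L + a) powr (\<beta> + r)))"
    using \<beta> La by (intro has_bochner_integral_mult_right has_bochner_integral_powr_exp) auto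
  moreover have "a powr \<beta> / Gamma \<beta> * (indicator {0<..} s * (s powr (\<beta> + r - 1) * exp (- (L + a) * s))) =
                 indicator {0<..} s * (s ^ r * exp (- L * s) * gamma_sub_density a b t s)" for s :: real
  proof (cases "s > 0")
    case True
    then have "s powr (\<beta> + r - 1) = s ^ r * s powr (\<beta> - 1)"
      by (simp add: powr_add[symmetric] powr_realpow[symmetric] algebra_simps)
    moreover have "exp (- (L + a) * s) = exp (- L * s) * exp (- a * s)"
      by (simp add: exp_add[symmetric] algebra_simps)
    ultimately show ?thesis
      using True by (simp add: gamma_sub_density_def \<beta>_def)
  qed simp
  moreover have "a powr \<beta> / Gamma \<beta> * (Gamma (\<beta> + r) / (L + a) powr (\<beta> + r)) =
                 (a / (L + a)) powr \<beta> * pochhammer \<beta> r / (L + a) ^ r"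
    using Gamma_\<beta> La a \<beta>
    by (simp add: Gamma_shift powr_add powr_realpow powr_divide field_simps)
  ultimately show ?thesis
    by (simp add: \<beta>_def)
qed

lemma has_bochner_integral_composite_coeff:
  fixes f :: "'a \<Rightarrow> nat \<Rightarrow> real"
  assumes "\<And>r. has_bochner_integral M (\<lambda>s. f s r) (c r)"
  shows "has_bochner_integral M (\<lambda>s. composite_coeff (f s) q k x n) (composite_coeff c q k x n)"
  unfolding composite_coeff_def
  by (intro has_bochner_integral_sum has_bochner_integral_mult_left assms)

definition lam_ratio :: "nat \<Rightarrow> (nat \<Rightarrow> nat) \<Rightarrow> (nat \<Rightarrow> nat \<Rightarrow> real) \<Rightarrow> real \<Rightarrow> nat \<Rightarrow> nat \<Rightarrow> real" where
  "lam_ratio q k lam a i j = lam i j / (lam_total q k lam + a)"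

lemma lam_total_nonneg:
  assumes "\<forall>i\<in>{1..q}. \<forall>j\<in>{1..k i}. lam i j > 0"
  shows "lam_total q k lam \<ge> 0"
  unfolding lam_total_def by (intro sum_nonneg) (use assms in \<open>fastforce intro: less_imp_le\<close>)

lemma lam_ratio_nonneg:
  assumes "\<forall>i\<in>{1..q}. \<forall>j\<in>{1..k i}. lam i j > 0" and "a > 0"
  shows "\<forall>i\<in>{1..q}. \<forall>j\<in>{1..k i}. lam_ratio q k lam a i j \<ge> 0"
  using assms lam_total_nonneg[OF assms(1)]
  by (auto simp: lam_ratio_def intro: divide_nonneg_pos less_imp_le)

lemma sum_lam_ratio:
  "(\<Sum>i\<in>{1..q}. \<Sum>j\<in>{1..k i}. lam_ratio q k lam a i j) = lam_total q k lam / (lam_total q k lam + a)"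
  by (simp add: lam_ratio_def lam_total_def sum_divide_distrib)

lemma sum_lam_ratio_less_1:
  assumes "\<forall>i\<in>{1..q}. \<forall>j\<in>{1..k i}. lam i j > 0" and "a > 0"
  shows "(\<Sum>i\<in>{1..q}. \<Sum>j\<in>{1..k i}. lam_ratio q k lam a i j) < 1"
  unfolding sum_lam_ratio using assms lam_total_nonneg[OF assms(1)] by simp

lemma W_pmf_eq_composite_coeff:
  assumes "t > 0" and "a > 0" and "b > 0" and "lam_total q k lam + a > 0"
  shows "W_pmf q k lam a b t n =
           composite_coeff (\<lambda>r. (a / (lam_total q k lam + a)) powr (b * t) * pochhammer (b * t) r)
             q k (lam_ratio q k lam a) n"
proof -
  define L where "L = lam_total q k lam"
  have "W_pmf q k lam a b t n =
        integral\<^sup>L lborel (\<lambda>s. composite_coeff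
          (\<lambda>r. indicator {0<..} s * (s ^ r * exp (- L * s) * gamma_sub_density a b t s)) q k lam n)"
    unfolding W_pmf_def set_lebesgue_integral_def mgcp_pmf_eq_composite_coeff L_def
    by (simp add: composite_coeff_mult_left composite_coeff_mult_right)
  also have "\<dots> = composite_coeff (\<lambda>r. (a / (L + a)) powr (b * t) * pochhammer (b * t) r / (L + a) ^ r) q k lam n"
    using assms unfolding L_def[symmetric]
    by (intro has_bochner_integral_integral_eq has_bochner_integral_composite_coeff
              has_bochner_integral_gamma_moment)
  also have "\<dots> = composite_coeff (\<lambda>r. (a / (L + a)) powr (b * t) * pochhammer (b * t) r) q k (\<lambda>i j. lam i j / (L + a)) n"
    by (rule composite_coeff_scale)
  finally show ?thesis
    by (simp only: L_def lam_ratio_def[abs_def])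
qed

lemma W_charfun_eq_powr:
  assumes lam: "\<forall>i\<in>{1..q}. \<forall>j\<in>{1..k i}. lam i j > 0"
    and t: "t > 0" and a: "a > 0" and b: "b > 0"
  shows "W_charfun q k lam a b t \<theta> =
           complex_of_real ((a / (lam_total q k lam + a)) powr (b * t)) *
           (1 - jump_char q k (lam_ratio q k lam a) \<theta>) powr (- complex_of_real (b * t))"
  unfolding W_charfun_def
proof (rule infsumI)
  have La: "lam_total q k lam + a > 0"
    using lam_total_nonneg[OF lam] a by simp
  show "((\<lambda>n. complex_of_real (W_pmf q k lam a b t n) * cis (\<Sum>i\<in>{1..q}. \<theta> i * real (n i))) has_sum
          complex_of_real ((a / (lam_total q k lam + a)) powr (b * t)) *
          (1 - jump_char q k (lam_ratio q k lam a) \<theta>) powr (- complex_of_real (b * t))) (NQ q)"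
    unfolding W_pmf_eq_composite_coeff[OF t a b La]
  proof (rule has_sum_composite_coeff_cis[OF lam_ratio_nonneg[OF lam a] _ sum_lam_ratio_less_1[OF lam a],
           where F="\<lambda>z. complex_of_real ((a / (lam_total q k lam + a)) powr (b * t)) *
                         (1 - z) powr (- complex_of_real (b * t))"])
    show "0 \<le> (a / (lam_total q k lam + a)) powr (b * t) * pochhammer (b * t) r" for r
      using a b t by (simp add: pochhammer_nonneg)
    show "(\<lambda>r. complex_of_real ((a / (lam_total q k lam + a)) powr (b * t) * pochhammer (b * t) r) * z ^ r / fact r)
            sums (complex_of_real ((a / (lam_total q k lam + a)) powr (b * t)) * (1 - z) powr (- complex_of_real (b * t)))"
      if "norm z < 1" for z
      using sums_mult[OF binomial_series_pochhammer[OF that, of "b * t"],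
                      of "complex_of_real ((a / (lam_total q k lam + a)) powr (b * t))"]
      by (simp add: mult_ac)
  qed
qed

lemma W_charfun_eq_exp:
  assumes lam: "\<forall>i\<in>{1..q}. \<forall>j\<in>{1..k i}. lam i j > 0"
    and t: "t > 0" and a: "a > 0" and b: "b > 0"
  shows "W_charfun q k lam a b t \<theta> =
           exp (complex_of_real t * (- complex_of_real b *
                  (Ln (1 - jump_char q k (lam_ratio q k lam a) \<theta>) -
                   Ln (1 - jump_char q k (lam_ratio q k lam a) (\<lambda>_. 0)))))"
proof -
  define L where "L = lam_total q k lam"
  define \<beta> where "\<beta> = b * t"
  define X where "X = jump_char q k (lam_ratio q k lam a) \<theta>"
  have La: "L + a > 0"
    using lam_total_nonneg[OF lam] a by (simp add: L_def)
  have "1 - L / (L + a) = a / (L + a)"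
    using La by (simp add: field_simps)
  then have X0: "1 - jump_char q k (lam_ratio q k lam a) (\<lambda>_. 0) = complex_of_real (a / (L + a))"
    unfolding jump_char_zero sum_lam_ratio L_def[symmetric] by (metis of_real_1 of_real_diff)
  have "X \<noteq> 1"
    using norm_jump_char_le[OF lam_ratio_nonneg[OF lam a], of \<theta>] sum_lam_ratio_less_1[OF lam a]
    by (auto simp: X_def)
  have "(a / (L + a)) powr \<beta> = exp (\<beta> * ln (a / (L + a)))"
    using a La by (simp add: powr_def)
  then have "complex_of_real ((a / (L + a)) powr \<beta>) =
             exp (complex_of_real \<beta> * Ln (1 - jump_char q k (lam_ratio q k lam a) (\<lambda>_. 0)))"
    unfolding X0 using a La by (simp only: exp_of_real[symmetric] of_real_mult Ln_of_real divide_pos_pos)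
  moreover have "(1 - X) powr (- complex_of_real \<beta>) = exp (- complex_of_real \<beta> * Ln (1 - X))"
    using \<open>X \<noteq> 1\<close> by (simp add: powr_def)
  ultimately show ?thesis
    unfolding W_charfun_eq_powr[OF lam t a b] L_def[symmetric] \<beta>_def[symmetric] X_def[symmetric]
    by (simp add: \<beta>_def algebra_simps flip: exp_add)
qed

section \<open>The Levy measure\<close>

lemma has_sum_levy_char:
  fixes p :: "nat \<Rightarrow> nat \<Rightarrow> real"
  assumes p_nonneg: "\<forall>i\<in>{1..q}. \<forall>j\<in>{1..k i}. p i j \<ge> 0"
    and total: "(\<Sum>i\<in>{1..q}. \<Sum>j\<in>{1..k i}. p i j) < 1"
    and b: "b \<ge> 0"
  shows "((\<lambda>n. complex_of_real (composite_coeff (\<lambda>r. b * Gamma (real r)) q k p n) *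
                cis (\<Sum>i\<in>{1..q}. \<theta> i * real (n i)))
           has_sum - (complex_of_real b * Ln (1 - jump_char q k p \<theta>))) (NQ q)"
proof (rule has_sum_composite_coeff_cis[OF p_nonneg _ total])
  show "0 \<le> b * Gamma (real r)" for r
    using b Gamma_of_nat_nonneg by simp
  show "(\<lambda>r. complex_of_real (b * Gamma (real r)) * z ^ r / fact r) sums - (complex_of_real b * Ln (1 - z))"
    if "norm z < 1" for z
    using sums_mult[OF Ln_series_Gamma[OF that], of "complex_of_real b"] by (simp add: mult_ac)
qed

lemma levy_char_exponent:
  fixes p :: "nat \<Rightarrow> nat \<Rightarrow> real"
  assumes "\<forall>i\<in>{1..q}. \<forall>j\<in>{1..k i}. p i j \<ge> 0"
    and "(\<Sum>i\<in>{1..q}. \<Sum>j\<in>{1..k i}. p i j) < 1"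
    and "b \<ge> 0"
  shows "infsum (\<lambda>n. complex_of_real (composite_coeff (\<lambda>r. b * Gamma (real r)) q k p n) *
                     (cis (\<Sum>i\<in>{1..q}. \<theta> i * real (n i)) - 1)) (NQ q) =
         - complex_of_real b * (Ln (1 - jump_char q k p \<theta>) - Ln (1 - jump_char q k p (\<lambda>_. 0)))"
proof (rule infsumI)
  have "((\<lambda>n. - complex_of_real (composite_coeff (\<lambda>r. b * Gamma (real r)) q k p n))
           has_sum complex_of_real b * Ln (1 - jump_char q k p (\<lambda>_. 0))) (NQ q)"
    using has_sum_uminusI[OF has_sum_levy_char[OF assms, of "\<lambda>_. 0"]] by simp
  from has_sum_add[OF has_sum_levy_char[OF assms, of \<theta>] this]
  show "((\<lambda>n. complex_of_real (composite_coeff (\<lambda>r. b * Gamma (real r)) q k p n) *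
                (cis (\<Sum>i\<in>{1..q}. \<theta> i * real (n i)) - 1)) has_sum
         - complex_of_real b * (Ln (1 - jump_char q k p \<theta>) - Ln (1 - jump_char q k p (\<lambda>_. 0)))) (NQ q)"
    by (simp add: algebra_simps)
qed

lemma infsum_levy_mass:
  "infsum (composite_coeff (\<lambda>r. b * Gamma (real r)) q k (lam_ratio q k lam a))
     {n \<in> NQ q. \<forall>i\<in>{1..q}. n i \<in> A i} = levy_formula q k lam a b A"
proof -
  define ind where "ind n = (if \<forall>i\<in>{1..q}. n i \<in> A i then 1 else 0 :: real)" for n :: "nat \<Rightarrow> nat"
  define T where "T = composite_coeff (\<lambda>r. Gamma (real r)) q k (lam_ratio q k lam a)"
  have "infsum (composite_coeff (\<lambda>r. b * Gamma (real r)) q k (lam_ratio q k lam a))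
          {n \<in> NQ q. \<forall>i\<in>{1..q}. n i \<in> A i} = infsum (\<lambda>n. b * (T n * ind n)) (NQ q - {zeroQ})"
    by (rule infsum_cong_neutral)
       (auto simp: ind_def T_def composite_coeff_zeroQ composite_coeff_mult_left)
  also have "\<dots> = levy_formula q k lam a b A"
    by (simp add: infsum_cmult_right' levy_formula_def T_def ind_def composite_coeff_def lam_ratio_def
                  sum_distrib_right)
  finally show ?thesis .
qed

theorem mainTheorem16:
  fixes q :: nat and k :: "nat \<Rightarrow> nat" and lam :: "nat \<Rightarrow> nat \<Rightarrow> real" and a b :: real
  assumes "q \<ge> 1"
    and "\<forall>i\<in>{1..q}. k i \<ge> 1"
    and "\<forall>i\<in>{1..q}. \<forall>j\<in>{1..k i}. lam i j > 0"
    and "a > 0" and "b > 0"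
  shows "\<exists>\<pi> :: (nat \<Rightarrow> nat) \<Rightarrow> real.
           (\<forall>n\<in>NQ q. \<pi> n \<ge> 0) \<and> \<pi> zeroQ = 0 \<and> \<pi> summable_on NQ q \<and>
           (\<forall>t>0. \<forall>\<theta> :: nat \<Rightarrow> real.
              W_charfun q k lam a b t \<theta> =
              exp (complex_of_real t *
                   infsum (\<lambda>n. complex_of_real (\<pi> n) *
                                 (cis (\<Sum>i\<in>{1..q}. \<theta> i * real (n i)) - 1)) (NQ q))) \<and>
           (\<forall>A :: nat \<Rightarrow> nat set.
              infsum \<pi> {n \<in> NQ q. \<forall>i\<in>{1..q}. n i \<in> A i} = levy_formula q k lam a b A)"
proof -
  note lam = assms(3) and a = assms(4) and b = assms(5)
  define \<pi> where "\<pi> = composite_coeff (\<lambda>r. b * Gamma (real r)) q k (lam_ratio q k lam a)"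
  note p_nonneg = lam_ratio_nonneg[OF lam a] and total = sum_lam_ratio_less_1[OF lam a]
  note levy_char = has_sum_levy_char[OF p_nonneg total less_imp_le[OF b], folded \<pi>_def]
  show ?thesis
  proof (intro exI[of _ \<pi>] conjI ballI allI impI)
    show "\<pi> n \<ge> 0" for n
      unfolding \<pi>_def using b p_nonneg by (intro composite_coeff_nonneg) (simp_all add: Gamma_of_nat_nonneg)
    show "\<pi> zeroQ = 0"
      by (simp add: \<pi>_def composite_coeff_zeroQ)
    show "\<pi> summable_on NQ q"
      using has_sum_Re[OF levy_char[of "\<lambda>_. 0"]] by (auto simp: summable_on_def)
    show "W_charfun q k lam a b t \<theta> = exp (complex_of_real t *
            infsum (\<lambda>n. complex_of_real (\<pi> n) * (cis (\<Sum>i\<in>{1..q}. \<theta> i * real (n i)) - 1)) (NQ q))"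
      if "t > 0" for t \<theta>
      unfolding \<pi>_def levy_char_exponent[OF p_nonneg total less_imp_le[OF b]]
      by (rule W_charfun_eq_exp[OF lam that a b])
    show "infsum \<pi> {n \<in> NQ q. \<forall>i\<in>{1..q}. n i \<in> A i} = levy_formula q k lam a b A" for A
      unfolding \<pi>_def by (rule infsum_levy_mass)
  qed
qed

end
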